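(* Let $d\ge1$, let $\{\zeta_i\}_{i=0}^d$ be any scalars, and let $P(x)=\sum_{i=0}^d\frac{(-1)^i\zeta_ix^i}{([i]^!_q)^2}$ be the corresponding Drinfel'd polynomial. Put $\theta_i=q^{2i-d}$ and $\theta^*_i=q^{d-2i}$ for $0\le i\le d$. Then $$\sum_{i=0}^d\eta_{d-i}(\theta_0)\,\eta^*_{d-i}(\theta^*_0)\,\zeta_i=(-1)^d([d]^!_q)^2(q-q^{-1})^{2d}\,P\!\left(\frac{1}{(q-q^{-1})^2}\right).$$
   Context: $\mathcal K$ is a field; $q\in\mathcal K$ is nonzero and not a root of unity; $[i]_q=\frac{q^i-q^{-i}}{q-q^{-1}}$, $[i]^!_q=\prod_{n=1}^i[n]_q$ ($[0]^!_q=1$). For $0\le i\le d$: $\eta_i(x)=(x-\theta_d)(x-\theta_{d-1})\cdots(x-\theta_{d-i+1})$ and $\eta^*_i(x)=(x-\theta^*_d)(x-\theta^*_{d-1})\cdots(x-\theta^*_{d-i+1})$ (empty product $=1$). *)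

theory Defs
  imports Main
begin

definition qint :: "'a::field \<Rightarrow> nat \<Rightarrow> 'a" where
  "qint q i = (q ^ i - inverse q ^ i) / (q - inverse q)"

definition qfact :: "'a::field \<Rightarrow> nat \<Rightarrow> 'a" where
  "qfact q i = (\<Prod>n=1..i. qint q n)"

definition eta :: "(nat \<Rightarrow> 'a::field) \<Rightarrow> nat \<Rightarrow> nat \<Rightarrow> 'a \<Rightarrow> 'a" where
  "eta th d i x = (\<Prod>k<i. x - th (d - k))"

definition drinfeld_poly :: "'a::field \<Rightarrow> nat \<Rightarrow> (nat \<Rightarrow> 'a) \<Rightarrow> 'a \<Rightarrow> 'a" where
  "drinfeld_poly q d \<zeta> x = (\<Sum>i=0..d. (-1) ^ i * \<zeta> i * x ^ i / (qfact q i) ^ 2)"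

end

theory Submission
  imports Defs
begin

text \<open>With \<open>\<theta>\<^sub>i = q\<^bsup>2i-d\<^esup>\<close> and \<open>\<theta>\<^sup>*\<^sub>i = q\<^bsup>d-2i\<^esup>\<close> each factor
  \<open>(\<theta>\<^sub>0 - \<theta>\<^sub>m)(\<theta>\<^sup>*\<^sub>0 - \<theta>\<^sup>*\<^sub>m) = 2 - q\<^bsup>2m\<^esup> - q\<^bsup>-2m\<^esup>\<close> equals
  \<open>-(q - q\<^sup>-\<^sup>1)\<^sup>2 [m]\<^sub>q\<^sup>2\<close>. Hence
  \<open>\<eta>\<^sub>d\<^sub>-\<^sub>i(\<theta>\<^sub>0) \<eta>\<^sup>*\<^sub>d\<^sub>-\<^sub>i(\<theta>\<^sup>*\<^sub>0) = (-1)\<^bsup>d-i\<^esup> (q - q\<^sup>-\<^sup>1)\<^bsup>2(d-i)\<^esup> ([d]\<^sup>!\<^sub>q / [i]\<^sup>!\<^sub>q)\<^sup>2\<close>,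
  which is exactly the coefficient of \<open>\<zeta>\<^sub>i\<close> on the right-hand side; the identity
  holds term by term.\<close>

lemma prod_lessThan_diff_eq_prod_greaterThanAtMost:
  fixes f :: "nat \<Rightarrow> 'a::comm_monoid_mult"
  assumes "n \<le> d"
  shows "(\<Prod>k<n. f (d - k)) = prod f {d - n<..d}"
  using assms
proof (induction n)
  case 0
  then show ?case by simp
next
  case (Suc n)
  then have "{d - Suc n<..d} = insert (d - n) {d - n<..d}" by auto
  with Suc show ?case by (simp add: mult.commute)
qed

lemma eta_eq_prod_greaterThanAtMost:
  "n \<le> d \<Longrightarrow> eta th d n x = (\<Prod>m\<in>{d - n<..d}. x - th m)"
  unfolding eta_def by (rule prod_lessThan_diff_eq_prod_greaterThanAtMost)

lemma q_minus_inverse_nonzero: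
  fixes q :: "'a::field"
  assumes "q \<noteq> 0" and "q ^ 2 \<noteq> 1"
  shows "q - inverse q \<noteq> 0"
  using assms by (auto simp: field_simps power2_eq_square)

lemma qint_nonzero:
  fixes q :: "'a::field"
  assumes "q \<noteq> 0" and "q ^ (2 * m) \<noteq> 1"
  shows "qint q m \<noteq> 0"
proof
  assume "qint q m = 0"
  moreover have "q - inverse q \<noteq> 0"
    using assms by (intro q_minus_inverse_nonzero) (auto simp: power_mult)
  ultimately have "q ^ m = inverse q ^ m"
    unfolding qint_def by simp
  then have "q ^ m * q ^ m = 1"
    using assms(1) by (simp add: power_inverse field_simps)
  with assms(2) show False
    by (simp add: mult_2 power_add)
qed

lemma qfact_nonzero:
  fixes q :: "'a::field"
  assumes "q \<noteq> 0" and "\<And>n. n \<ge> 1 \<Longrightarrow> q ^ n \<noteq> 1"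
  shows "qfact q i \<noteq> 0"
proof -
  have "qint q m \<noteq> 0" if "m \<ge> 1" for m
    using assms that by (intro qint_nonzero) auto
  then show ?thesis
    unfolding qfact_def by simp
qed

lemma qfact_split:
  assumes "i \<le> d"
  shows "qfact q d = qfact q i * (\<Prod>m\<in>{i<..d}. qint q m)"
proof -
  have "{1..d} = {1..i} \<union> {i<..d}"
    using assms by auto
  then show ?thesis
    unfolding qfact_def by (simp add: prod.union_disjoint ivl_disj_int)
qed

lemma theta_gap_product:
  fixes q :: "'a::field"
  assumes "q \<noteq> 0" and "q - inverse q \<noteq> 0" and "m \<le> d"
    and "\<And>j. j \<le> d \<Longrightarrow> \<theta> j = q powi (2 * int j - int d)"
    and "\<And>j. j \<le> d \<Longrightarrow> \<theta>s j = q powi (int d - 2 * int j)"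
  shows "(\<theta> 0 - \<theta> m) * (\<theta>s 0 - \<theta>s m) = - (((q - inverse q) * qint q m) ^ 2)"
proof -
  have "q ^ m \<noteq> 0" and "q ^ d \<noteq> 0"
    using assms(1) by simp_all
  have powi_diff: "q powi (int a - int b) = q ^ a / q ^ b" for a b
    using assms(1) by (simp add: power_int_diff)
  have "\<theta> 0 = 1 / q ^ d" and "\<theta>s 0 = q ^ d"
    using assms(4,5) [of 0] powi_diff [of 0 d] powi_diff [of d 0] by simp_all
  moreover have "\<theta> m = q ^ (m + m) / q ^ d"
  proof -
    have "\<theta> m = q powi (int (m + m) - int d)"
      using assms(4) [OF assms(3)] by simp
    then show ?thesis by (simp only: powi_diff)
  qed
  moreover have "\<theta>s m = q ^ d / q ^ (m + m)"
  proof -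
    have "\<theta>s m = q powi (int d - int (m + m))"
      using assms(5) [OF assms(3)] by simp
    then show ?thesis by (simp only: powi_diff)
  qed
  ultimately have "(\<theta> 0 - \<theta> m) * (\<theta>s 0 - \<theta>s m)
      = (1 / q ^ d - q ^ m * q ^ m / q ^ d) * (q ^ d - q ^ d / (q ^ m * q ^ m))"
    by (simp add: power_add)
  also have "\<dots> = - ((q ^ m - inverse q ^ m) ^ 2)"
    using \<open>q ^ m \<noteq> 0\<close> \<open>q ^ d \<noteq> 0\<close> by (simp add: field_simps power_inverse power2_eq_square)
  also have "\<dots> = - (((q - inverse q) * qint q m) ^ 2)"
    using assms(2) by (simp add: qint_def)
  finally show ?thesis .
qed

lemma eta_product_closed_form:
  fixes q :: "'a::field"
  assumes "q \<noteq> 0" and "q - inverse q \<noteq> 0" and "i \<le> d"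
    and "\<And>j. j \<le> d \<Longrightarrow> \<theta> j = q powi (2 * int j - int d)"
    and "\<And>j. j \<le> d \<Longrightarrow> \<theta>s j = q powi (int d - 2 * int j)"
  shows "eta \<theta> d (d - i) (\<theta> 0) * eta \<theta>s d (d - i) (\<theta>s 0)
         = (-1) ^ (d - i) * (q - inverse q) ^ (2 * (d - i)) * (\<Prod>m\<in>{i<..d}. qint q m) ^ 2"
proof -
  have "eta \<theta> d (d - i) (\<theta> 0) * eta \<theta>s d (d - i) (\<theta>s 0)
        = (\<Prod>m\<in>{i<..d}. (\<theta> 0 - \<theta> m) * (\<theta>s 0 - \<theta>s m))"
    using assms(3) by (simp add: eta_eq_prod_greaterThanAtMost prod.distrib)
  also have "\<dots> = (\<Prod>m\<in>{i<..d}. (-1) * (q - inverse q) ^ 2 * qint q m ^ 2)"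
  proof (rule prod.cong)
    fix m assume "m \<in> {i<..d}"
    then show "(\<theta> 0 - \<theta> m) * (\<theta>s 0 - \<theta>s m) = (-1) * (q - inverse q) ^ 2 * qint q m ^ 2"
      using theta_gap_product [OF assms(1,2) _ assms(4,5)] by (simp add: power_mult_distrib)
  qed simp
  also have "\<dots> = (-1) ^ (d - i) * (q - inverse q) ^ (2 * (d - i)) * (\<Prod>m\<in>{i<..d}. qint q m) ^ 2"
    unfolding prod.distrib prod_constant card_greaterThanAtMost
    by (simp add: power_mult prod_power_distrib)
  finally show ?thesis .
qed

theorem lemma8p2:
  fixes q :: "'a::field" and d :: nat and \<zeta> :: "nat \<Rightarrow> 'a"
    and \<theta> \<theta>s :: "nat \<Rightarrow> 'a"
  assumes "q \<noteq> 0"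
    and "\<And>n. n \<ge> 1 \<Longrightarrow> q ^ n \<noteq> 1"
    and "d \<ge> 1"
    and "\<And>i. i \<le> d \<Longrightarrow> \<theta> i = q powi (2 * int i - int d)"
    and "\<And>i. i \<le> d \<Longrightarrow> \<theta>s i = q powi (int d - 2 * int i)"
  shows "(\<Sum>i=0..d. eta \<theta> d (d - i) (\<theta> 0) * eta \<theta>s d (d - i) (\<theta>s 0) * \<zeta> i)
       = (-1) ^ d * (qfact q d) ^ 2 * (q - inverse q) ^ (2 * d)
           * drinfeld_poly q d \<zeta> (1 / (q - inverse q) ^ 2)"
proof -
  define c where "c = q - inverse q"
  have "c \<noteq> 0"
    unfolding c_def using assms(1,2) by (intro q_minus_inverse_nonzero) auto
  have termwise: "eta \<theta> d (d - i) (\<theta> 0) * eta \<theta>s d (d - i) (\<theta>s 0) * \<zeta> i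
      = (-1) ^ d * qfact q d ^ 2 * c ^ (2 * d) * ((-1) ^ i * \<zeta> i * (1 / c ^ 2) ^ i / qfact q i ^ 2)"
    if "i \<le> d" for i
  proof -
    have "(-1 :: 'a) ^ d = (-1) ^ (d - i) * (-1) ^ i"
      and "c ^ (2 * d) = c ^ (2 * (d - i)) * c ^ (2 * i)"
      using that by (simp_all flip: power_add add_mult_distrib2)
    moreover have "eta \<theta> d (d - i) (\<theta> 0) * eta \<theta>s d (d - i) (\<theta>s 0)
        = (-1) ^ (d - i) * c ^ (2 * (d - i)) * (\<Prod>m\<in>{i<..d}. qint q m) ^ 2"
      using eta_product_closed_form [OF assms(1) _ that assms(4,5)] \<open>c \<noteq> 0\<close> unfolding c_def .
    ultimately show ?thesis
      using \<open>c \<noteq> 0\<close> qfact_nonzero [OF assms(1,2), of i] qfact_split [OF that, of q]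
      by (simp add: field_simps power_mult_distrib flip: power_mult)
  qed
  then show ?thesis
    unfolding drinfeld_poly_def sum_distrib_left c_def [symmetric] by (intro sum.cong) auto
qed

end
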